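(* Fix $\lambda_s>0,\lambda>0$, $\alpha\in[0,1]$ and constants $0<c_1\le c_2$. For each $n\ge3$ let $\tilde n(n)$ be an integer with $1\le\tilde n(n)\le n$ and $c_1n^\alpha\le\tilde n(n)\le c_2 n^\alpha$. Then there exist $C>0$ and $N$ such that for all $n\ge N$ and every choice of $\tilde n(n)$ distinct jammed links of the ring $R(n)$, the average age $\Delta^{\ell}$ of the jammed ring satisfies $$\Delta^\ell\ge\begin{cases}C\,n^{\alpha}, & \alpha\ge \tfrac12,\\ C\sqrt n, & \alpha<\tfrac12.\end{cases}$$
   Context: Version-age model. A gossip network on a finite node set $\mathcal N$ is specified by source rates $\lambda_{0j}>0$ ($j\in\mathcal N$) and gossip rates $\lambda_{ij}\ge 0$ for ordered pairs $i\neq j$ ($\lambda_{ij}$ is the rate at which node $i$ sends updates to node $j$); $\lambda_s>0$ is the source's update rate. For nonempty $S\subseteq\mathcal N$ let $N(S)=\{i\in\mathcal N\setminus S:\ \sum_{j\in S}\lambda_{ij}>0\}$, and define the version ages recursively by $$\Delta_S=\frac{\lambda_s+\sum_{i\in N(S)}\big(\sum_{j\in S}\lambda_{ij}\big)\Delta_{S\cup\{i\}}}{\sum_{j\in S}\lambda_{0j}+\sum_{i\in N(S)}\sum_{j\in S}\lambda_{ij}}$$ (well defined by downward induction on $|S|$); $\Delta_i=\Delta_{\{i\}}$. Ring $R(n)$: nodes $\{1,\dots,n\}$, $\lambda_{0j}=\lambda/n$, and for each of the $n$ ring links $\{i,i+1\}$ (indices mod $n$) $\lambda_{i,i+1}=\lambda_{i+1,i}=\lambda/2$;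 all other rates $0$. Jamming $\tilde n$ distinct ring links means setting both rates of each of these links to $0$ (the ring then splits into $\tilde n$ line segments). The average age of the jammed ring is $\Delta^\ell=\frac1n\sum_{i=1}^n\Delta_i$ computed in the jammed network. *)

theory Defs
  imports Complex_Main
begin

text \<open>Version age of a general gossip network with finite node set Nd, source
rates l0, gossip rates lg (lg i j = rate from i to j) and source rate ls.
The downward recursion on |S| is implemented with an explicit fuel argument.\<close>

definition nbrs :: "'a set \<Rightarrow> ('a \<Rightarrow> 'a \<Rightarrow> real) \<Rightarrow> 'a set \<Rightarrow> 'a set" where
  "nbrs Nd lg S = {i \<in> Nd - S. (\<Sum>j\<in>S. lg i j) > 0}"

fun vage :: "nat \<Rightarrow> 'a set \<Rightarrow> ('a \<Rightarrow> real) \<Rightarrow> ('a \<Rightarrow> 'a \<Rightarrow> real) \<Rightarrow> real \<Rightarrow> 'a set \<Rightarrow> real" where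
  "vage 0 Nd l0 lg ls S = 0"
| "vage (Suc k) Nd l0 lg ls S =
     (ls + (\<Sum>i\<in>nbrs Nd lg S. (\<Sum>j\<in>S. lg i j) * vage k Nd l0 lg ls (insert i S)))
     / ((\<Sum>j\<in>S. l0 j) + (\<Sum>i\<in>nbrs Nd lg S. \<Sum>j\<in>S. lg i j))"

definition version_age :: "'a set \<Rightarrow> ('a \<Rightarrow> real) \<Rightarrow> ('a \<Rightarrow> 'a \<Rightarrow> real) \<Rightarrow> real \<Rightarrow> 'a set \<Rightarrow> real" where
  "version_age Nd l0 lg ls S = vage (card Nd + 1 - card S) Nd l0 lg ls S"

text \<open>Ring R(n) on nodes {0..<n}; link k (k < n) joins k and (k+1) mod n.
J is the set of jammed link indices: both directions of a jammed link get rate 0.\<close>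

definition jammed_ring_rate :: "nat \<Rightarrow> real \<Rightarrow> nat set \<Rightarrow> nat \<Rightarrow> nat \<Rightarrow> real" where
  "jammed_ring_rate n lam J i j =
     (if i < n \<and> j < n \<and> i \<noteq> j \<and>
         ((j = (i + 1) mod n \<and> i \<notin> J) \<or> (i = (j + 1) mod n \<and> j \<notin> J))
      then lam / 2 else 0)"

definition jammed_ring_avg_age :: "nat \<Rightarrow> real \<Rightarrow> real \<Rightarrow> nat set \<Rightarrow> real" where
  "jammed_ring_avg_age n lam ls J =
     (1 / real n) * (\<Sum>i<n. version_age {..<n} (\<lambda>_. lam / real n) (jammed_ring_rate n lam J) ls {i})"

end

theory Submission
  imports Defs
begin

text \<open>A version age dominates every subsolution of its defining recursion, i.e. every f with
  f S * (l0(S) + inflow S) \<le> ls + (\<Sum>i. lg(i,S) * f (insert i S)) (lg(i,S) the rate from i into S)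
  on a family of sets closed under adding gossiping neighbours.
  Jamming cuts the ring into |J| segments, and the set grown from a node never leaves its segment K,
  so the constant ls / (lam |K| / n) is a subsolution; since the values n / |K| sum to n over each
  segment, the average age is at least ls |J| / lam, which is of order n powr \<alpha>.
  Regardless of the jamming, the sets grown from a node are arcs, which receive inflow at most 2 lam,
  and then \<beta> (2 sqrt n - |S|) with \<beta> = ls / (3 lam) is a subsolution, giving average age at least
  ls sqrt n / (3 lam).\<close>

definition inflow :: "'a set \<Rightarrow> ('a \<Rightarrow> 'a \<Rightarrow> real) \<Rightarrow> 'a set \<Rightarrow> real" where
  "inflow Nd lg S = (\<Sum>i\<in>nbrs Nd lg S. \<Sum>j\<in>S. lg i j)"

lemma inflow_nonneg: "0 \<le> inflow Nd lg S"
  unfolding inflow_def nbrs_def by (rule sum_nonneg) auto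

lemma subsolution_le_version_age:
  fixes f :: "'a set \<Rightarrow> real"
  assumes fin: "finite Nd"
    and P_sub: "\<And>S. P S \<Longrightarrow> S \<subseteq> Nd \<and> S \<noteq> {}"
    and l0_pos: "\<And>j. j \<in> Nd \<Longrightarrow> l0 j > 0"
    and P_insert: "\<And>S i. P S \<Longrightarrow> i \<in> nbrs Nd lg S \<Longrightarrow> P (insert i S)"
    and sub: "\<And>S. P S \<Longrightarrow> f S * ((\<Sum>j\<in>S. l0 j) + inflow Nd lg S)
                 \<le> ls + (\<Sum>i\<in>nbrs Nd lg S. (\<Sum>j\<in>S. lg i j) * f (insert i S))"
    and "P S0"
  shows "f S0 \<le> version_age Nd l0 lg ls S0"
proof -
  have "f S \<le> vage k Nd l0 lg ls S" if "P S" "k = card Nd + 1 - card S" for k S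
    using that
  proof (induction k arbitrary: S)
    case 0
    then have "card S \<le> card Nd" using P_sub fin card_mono by blast
    with "0.prems"(2) show ?case by simp
  next
    case (Suc k)
    have S: "S \<subseteq> Nd" "S \<noteq> {}" "finite S" using P_sub[OF Suc.prems(1)] fin finite_subset by auto
    define D where "D = (\<Sum>j\<in>S. l0 j) + inflow Nd lg S"
    have "(\<Sum>j\<in>S. l0 j) > 0" using S l0_pos by (intro sum_pos) auto
    then have D_pos: "D > 0" unfolding D_def using inflow_nonneg add_pos_nonneg by blast
    have IH: "f (insert i S) \<le> vage k Nd l0 lg ls (insert i S)" if i: "i \<in> nbrs Nd lg S" for i
    proof (rule Suc.IH[OF P_insert[OF Suc.prems(1) i]])
      have "i \<notin> S" "i \<in> Nd" using i unfolding nbrs_def by auto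
      moreover have "card S \<le> card Nd" using S fin card_mono by blast
      ultimately show "k = card Nd + 1 - card (insert i S)" using Suc.prems(2) S by simp
    qed
    have "(\<Sum>i\<in>nbrs Nd lg S. (\<Sum>j\<in>S. lg i j) * f (insert i S))
          \<le> (\<Sum>i\<in>nbrs Nd lg S. (\<Sum>j\<in>S. lg i j) * vage k Nd l0 lg ls (insert i S))"
      using IH by (intro sum_mono mult_left_mono) (auto simp: nbrs_def)
    then have "f S * D \<le> ls + (\<Sum>i\<in>nbrs Nd lg S. (\<Sum>j\<in>S. lg i j) * vage k Nd l0 lg ls (insert i S))"
      using sub[OF Suc.prems(1)] unfolding D_def by linarith
    then show ?case using D_pos by (simp add: pos_le_divide_eq D_def inflow_def)
  qed
  then show ?thesis unfolding version_age_def using \<open>P S0\<close> by blast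
qed

lemma version_age_ge_closed_region:
  assumes fin: "finite Nd" and K: "K \<subseteq> Nd"
    and l0_pos: "\<And>j. j \<in> Nd \<Longrightarrow> l0 j > 0"
    and closed: "\<And>i j. i \<in> Nd - K \<Longrightarrow> j \<in> K \<Longrightarrow> lg i j = 0"
    and "ls \<ge> 0" and S0: "S0 \<subseteq> K" "S0 \<noteq> {}"
  shows "ls / (\<Sum>j\<in>K. l0 j) \<le> version_age Nd l0 lg ls S0"
proof (rule subsolution_le_version_age[where P = "\<lambda>S. S \<subseteq> K \<and> S \<noteq> {}"])
  fix S i assume S: "S \<subseteq> K \<and> S \<noteq> {}" and i: "i \<in> nbrs Nd lg S"
  have "i \<in> K"
  proof (rule ccontr)
    assume "i \<notin> K"
    moreover have "i \<in> Nd" using i unfolding nbrs_def by simp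
    ultimately have "(\<Sum>j\<in>S. lg i j) = 0" using S closed by (intro sum.neutral) blast
    then show False using i unfolding nbrs_def by simp
  qed
  then show "insert i S \<subseteq> K \<and> insert i S \<noteq> {}" using S by simp
next
  fix S assume S: "S \<subseteq> K \<and> S \<noteq> {}"
  define c where "c = ls / (\<Sum>j\<in>K. l0 j)"
  have "finite K" using fin K finite_subset by blast
  moreover have "l0 j > 0" if "j \<in> K" for j using that K l0_pos by blast
  ultimately have "(\<Sum>j\<in>S. l0 j) \<le> (\<Sum>j\<in>K. l0 j)" "(\<Sum>j\<in>K. l0 j) > 0"
    using S by (metis DiffD1 less_imp_le sum_mono2, metis subset_empty sum_pos)
  then have "c * (\<Sum>j\<in>S. l0 j) \<le> ls"
    unfolding c_def using \<open>ls \<ge> 0\<close> by (simp add: divide_le_eq mult_left_mono mult.commute)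
  then show "c * ((\<Sum>j\<in>S. l0 j) + inflow Nd lg S) \<le> ls + (\<Sum>i\<in>nbrs Nd lg S. (\<Sum>j\<in>S. lg i j) * c)"
    by (simp add: inflow_def distrib_left sum_distrib_left mult.commute)
qed (use fin K l0_pos S0 in blast)+

lemma version_age_ge_bounded_inflow:
  fixes a w \<beta> T :: real
  assumes fin: "finite Nd"
    and P_sub: "\<And>S. P S \<Longrightarrow> S \<subseteq> Nd \<and> S \<noteq> {}"
    and P_insert: "\<And>S i. P S \<Longrightarrow> i \<in> nbrs Nd lg S \<Longrightarrow> P (insert i S)"
    and l0: "\<And>j. j \<in> Nd \<Longrightarrow> l0 j = a" and "a > 0"
    and inflow_le: "\<And>S. P S \<Longrightarrow> inflow Nd lg S \<le> w"
    and "\<beta> \<ge> 0" and budget: "\<beta> * (a * T\<^sup>2 / 4 + w) \<le> ls"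
    and "P S0"
  shows "\<beta> * (T - real (card S0)) \<le> version_age Nd l0 lg ls S0"
proof (rule subsolution_le_version_age[where P = P])
  fix S assume "P S"
  then have S: "S \<subseteq> Nd" "finite S" using P_sub fin finite_subset by auto
  define k where "k = real (card S)"
  define W where "W = inflow Nd lg S"
  have "(\<Sum>j\<in>S. l0 j) = (\<Sum>j\<in>S. a)" using S l0 by (intro sum.cong) auto
  then have "(\<Sum>j\<in>S. l0 j) = a * k" unfolding k_def by simp
  moreover have "(\<Sum>i\<in>nbrs Nd lg S. (\<Sum>j\<in>S. lg i j) * (\<beta> * (T - real (card (insert i S)))))
      = W * (\<beta> * (T - k - 1))"
    unfolding W_def inflow_def k_def sum_distrib_right
    using S by (intro sum.cong) (auto simp: nbrs_def)
  moreover have "\<beta> * (T - k) * (a * k) \<le> \<beta> * (a * T\<^sup>2 / 4)"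
  proof -
    have "(T - k) * k \<le> T\<^sup>2 / 4" using zero_le_power2[of "T - 2 * k"] by (simp add: power2_eq_square algebra_simps)
    then have "\<beta> * a * ((T - k) * k) \<le> \<beta> * a * (T\<^sup>2 / 4)"
      using \<open>\<beta> \<ge> 0\<close> \<open>a > 0\<close> by (intro mult_left_mono) auto
    then show ?thesis by (simp only: ac_simps)
  qed
  moreover have "\<beta> * W \<le> \<beta> * w" using inflow_le[OF \<open>P S\<close>] \<open>\<beta> \<ge> 0\<close> unfolding W_def by (rule mult_left_mono)
  ultimately show "\<beta> * (T - real (card S)) * ((\<Sum>j\<in>S. l0 j) + inflow Nd lg S)
      \<le> ls + (\<Sum>i\<in>nbrs Nd lg S. (\<Sum>j\<in>S. lg i j) * (\<beta> * (T - real (card (insert i S)))))"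
    using budget unfolding W_def[symmetric] k_def[symmetric] by (simp add: algebra_simps)
qed (use fin P_sub l0 \<open>a > 0\<close> P_insert \<open>P S0\<close> in auto)

lemma sum_inverse_card_fibres:
  assumes "finite A"
  shows "(\<Sum>x\<in>A. 1 / real (card {y\<in>A. f y = f x})) = real (card (f ` A))"
proof -
  have "(\<Sum>x\<in>A. 1 / real (card {y\<in>A. f y = f x}))
      = (\<Sum>b\<in>f ` A. \<Sum>x\<in>{x\<in>A. f x = b}. 1 / real (card {y\<in>A. f y = b}))"
    using assms by (subst sum.image_gen[where g = f]) (auto intro!: sum.cong)
  also have "\<dots> = (\<Sum>b\<in>f ` A. 1)"
  proof (rule sum.cong[OF refl])
    fix b assume "b \<in> f ` A"
    then have "card {x\<in>A. f x = b} \<noteq> 0" using assms by auto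
    then show "(\<Sum>x\<in>{x\<in>A. f x = b}. 1 / real (card {y\<in>A. f y = b})) = 1" by simp
  qed
  finally show ?thesis by simp
qed

lemma jammed_ring_rate_nonneg: "lam \<ge> 0 \<Longrightarrow> jammed_ring_rate n lam J i j \<ge> 0"
  unfolding jammed_ring_rate_def by simp

lemma jammed_ring_rate_posD:
  assumes "jammed_ring_rate n lam J i j > 0"
  shows "i < n \<and> j < n \<and> ((j = (i + 1) mod n \<and> i \<notin> J) \<or> (i = (j + 1) mod n \<and> j \<notin> J))"
  using assms unfolding jammed_ring_rate_def by (auto split: if_splits)

text \<open>The first jammed link met when walking from i in increasing direction; its fibres are the
  line segments of the jammed ring.\<close>

definition next_jammed :: "nat \<Rightarrow> nat set \<Rightarrow> nat \<Rightarrow> nat" where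
  "next_jammed n J i = (i + (LEAST d. (i + d) mod n \<in> J)) mod n"

lemma next_jammed_exists:
  fixes n i :: nat
  assumes "J \<subseteq> {..<n}" "J \<noteq> {}" "i < n"
  shows "\<exists>d. (i + d) mod n \<in> J"
proof -
  obtain j where j: "j \<in> J" using assms by auto
  then have "i + (j + n - i) = j + n" "j < n" using assms by auto
  then show ?thesis using j by (metis mod_add_self2 mod_less)
qed

lemma next_jammed_in:
  assumes "J \<subseteq> {..<n}" "J \<noteq> {}" "i < n"
  shows "next_jammed n J i \<in> J"
  unfolding next_jammed_def using next_jammed_exists[OF assms] by (rule LeastI_ex)

lemma next_jammed_of_mem:
  assumes "J \<subseteq> {..<n}" "j \<in> J"
  shows "next_jammed n J j = j"
proof -
  have "j < n" using assms by auto
  then have "(LEAST d. (j + d) mod n \<in> J) = 0" using assms by (intro Least_eq_0) simp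
  then show ?thesis using \<open>j < n\<close> unfolding next_jammed_def by simp
qed

lemma next_jammed_Suc:
  assumes "J \<subseteq> {..<n}" "J \<noteq> {}" "i < n" "i \<notin> J"
  shows "next_jammed n J i = next_jammed n J ((i + 1) mod n)"
proof -
  have shift: "(i + Suc d) mod n = ((i + 1) mod n + d) mod n" for d
    by (simp add: mod_add_left_eq)
  have "(LEAST d. (i + d) mod n \<in> J) = Suc (LEAST d. (i + Suc d) mod n \<in> J)"
  proof -
    obtain d where "(i + d) mod n \<in> J" using next_jammed_exists[OF assms(1-3)] by blast
    then show ?thesis by (rule Least_Suc[where P = "\<lambda>d. (i + d) mod n \<in> J"]) (use assms in simp)
  qed
  then have "(LEAST d. (i + d) mod n \<in> J) = Suc (LEAST d. ((i + 1) mod n + d) mod n \<in> J)"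
    by (simp only: shift)
  then show ?thesis unfolding next_jammed_def by (simp only: shift)
qed

lemma next_jammed_eq_if_rate_pos:
  assumes "J \<subseteq> {..<n}" "J \<noteq> {}" "jammed_ring_rate n lam J i j > 0"
  shows "next_jammed n J i = next_jammed n J j"
  using jammed_ring_rate_posD[OF assms(3)] next_jammed_Suc[OF assms(1,2)] by metis

lemma jammed_ring_avg_age_ge_card:
  assumes J: "J \<subseteq> {..<n}" "J \<noteq> {}" and "lam > 0" "ls \<ge> 0"
  shows "ls / lam * real (card J) \<le> jammed_ring_avg_age n lam ls J"
proof -
  have "n > 0" using J by auto
  define seg where "seg i = {x\<in>{..<n}. next_jammed n J x = next_jammed n J i}" for i
  have age: "ls * real n / (lam * real (card (seg i)))
      \<le> version_age {..<n} (\<lambda>_. lam / real n) (jammed_ring_rate n lam J) ls {i}" if "i < n" for i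
  proof -
    have "(\<Sum>j\<in>seg i. lam / real n) = lam * real (card (seg i)) / real n" by simp
    moreover have "ls / (\<Sum>j\<in>seg i. lam / real n)
        \<le> version_age {..<n} (\<lambda>_. lam / real n) (jammed_ring_rate n lam J) ls {i}"
    proof (rule version_age_ge_closed_region)
      fix x y assume "x \<in> {..<n} - seg i" "y \<in> seg i"
      then have "\<not> jammed_ring_rate n lam J x y > 0"
        using next_jammed_eq_if_rate_pos[OF J] unfolding seg_def by auto
      then show "jammed_ring_rate n lam J x y = 0"
        using jammed_ring_rate_nonneg[of lam n J x y] \<open>lam > 0\<close> by simp
    qed (use \<open>i < n\<close> \<open>n > 0\<close> \<open>lam > 0\<close> \<open>ls \<ge> 0\<close> in \<open>auto simp: seg_def\<close>)
    ultimately show ?thesis using \<open>n > 0\<close> by (simp add: field_simps)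
  qed
  have "next_jammed n J ` {..<n} = J"
    using next_jammed_in[OF J] next_jammed_of_mem[OF J(1)] J(1) by force
  then have "(\<Sum>i<n. 1 / real (card (seg i))) = real (card J)"
    using sum_inverse_card_fibres[of "{..<n}" "next_jammed n J"] unfolding seg_def by simp
  moreover have "(\<Sum>i<n. ls * real n / (lam * real (card (seg i))))
      = real n * (ls / lam * (\<Sum>i<n. 1 / real (card (seg i))))"
    by (simp add: sum_distrib_left mult.commute)
  ultimately have "ls / lam * real (card J) = (1 / real n) * (\<Sum>i<n. ls * real n / (lam * real (card (seg i))))"
    using \<open>n > 0\<close> by simp
  also have "\<dots> \<le> jammed_ring_avg_age n lam ls J"
    unfolding jammed_ring_avg_age_def using age by (intro mult_left_mono sum_mono) auto
  finally show ?thesis .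
qed

lemma pred_mod_eq:
  fixes n i a :: nat
  assumes "i < n" "a mod n = (i + 1) mod n"
  shows "i = (a + n - 1) mod n"
proof -
  have "i = (i + 1 + (n - 1)) mod n" using assms(1) by simp
  also have "\<dots> = (a + (n - 1)) mod n" using assms(2) by (metis mod_add_left_eq)
  finally show ?thesis using assms(1) by simp
qed

lemma jammed_ring_rate_pos_neighbour:
  assumes "jammed_ring_rate n lam J i j > 0"
  shows "j \<in> {(i + 1) mod n, (i + n - 1) mod n}"
  using jammed_ring_rate_posD[OF assms] pred_mod_eq[of j n i] by auto

lemma sum_jammed_ring_rate_le:
  assumes "lam \<ge> 0" "finite S"
  shows "(\<Sum>j\<in>S. jammed_ring_rate n lam J i j) \<le> lam"
proof -
  define A where "A = S \<inter> {(i + 1) mod n, (i + n - 1) mod n}"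
  have "(\<Sum>j\<in>S. jammed_ring_rate n lam J i j) = (\<Sum>j\<in>A. jammed_ring_rate n lam J i j)"
    using assms jammed_ring_rate_pos_neighbour[of n lam J i] jammed_ring_rate_nonneg[of lam n J i]
    unfolding A_def by (intro sum.mono_neutral_right) (auto simp: le_less)
  also have "\<dots> \<le> real (card A) * (lam / 2)"
    by (rule sum_bounded_above) (use assms(1) in \<open>auto simp: jammed_ring_rate_def\<close>)
  also have "\<dots> \<le> 2 * (lam / 2)"
  proof -
    have "card A \<le> card {(i + 1) mod n, (i + n - 1) mod n}" unfolding A_def by (intro card_mono) auto
    also have "\<dots> \<le> 2" by (simp add: card_insert_if)
    finally show ?thesis using assms(1) by (intro mult_right_mono) auto
  qed
  finally show ?thesis by simp
qed

definition arc :: "nat \<Rightarrow> nat \<Rightarrow> nat \<Rightarrow> nat set" where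
  "arc n s m = (\<lambda>k. (s + k) mod n) ` {..<m}"

lemma arc_eq_lessThan:
  assumes "s < n" shows "arc n s n = {..<n}"
proof
  show "{..<n} \<subseteq> arc n s n"
  proof
    fix x assume "x \<in> {..<n}"
    then have "x = (s + (x + n - s) mod n) mod n" using assms by (simp add: mod_add_right_eq)
    then show "x \<in> arc n s n" unfolding arc_def using assms by (intro image_eqI[where x = "(x + n - s) mod n"]) auto
  qed
qed (use assms in \<open>auto simp: arc_def\<close>)

lemma insert_arc_end: "insert ((s + m) mod n) (arc n s m) = arc n s (Suc m)"
  unfolding arc_def by (simp add: lessThan_Suc)

lemma insert_arc_start:
  assumes "s < n"
  shows "insert ((s + n - 1) mod n) (arc n s m) = arc n ((s + n - 1) mod n) (Suc m)"
proof -
  have "((s + n - 1) mod n + Suc k) mod n = (s + k) mod n" for k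
  proof -
    have "s + n - 1 + Suc k = (s + k) + n" using assms by simp
    then show ?thesis by (metis mod_add_left_eq mod_add_self2)
  qed
  then show ?thesis unfolding arc_def lessThan_Suc_eq_insert_0 image_insert image_image by simp
qed

lemma nbrs_arc:
  assumes s: "s < n" and m: "m \<le> n" and i: "i \<in> nbrs {..<n} (jammed_ring_rate n lam J) (arc n s m)"
  shows "m < n \<and> i \<in> {(s + m) mod n, (s + n - 1) mod n}"
proof -
  have i_out: "i < n" "i \<notin> arc n s m" and pos: "(\<Sum>j\<in>arc n s m. jammed_ring_rate n lam J i j) > 0"
    using i unfolding nbrs_def by auto
  have "m < n" using i_out arc_eq_lessThan[OF s] m by (cases "m = n") auto
  obtain j where "j \<in> arc n s m" "jammed_ring_rate n lam J i j > 0"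
    using pos by (metis not_less sum_nonpos)
  then obtain k where k: "k < m" "j = (s + k) mod n" and
    adj: "j = (i + 1) mod n \<or> i = (j + 1) mod n"
    using jammed_ring_rate_posD unfolding arc_def by blast
  from adj show ?thesis
  proof
    assume "i = (j + 1) mod n"
    then have "i = (s + Suc k) mod n" using k by (simp add: mod_Suc_eq)
    moreover have "Suc k = m"
      using i_out \<open>i = (s + Suc k) mod n\<close> k unfolding arc_def by (metis imageI lessThan_iff not_less_eq Suc_lessI)
    ultimately show ?thesis using \<open>m < n\<close> by simp
  next
    assume "j = (i + 1) mod n"
    then have i_eq: "i = (s + k + n - 1) mod n" using pred_mod_eq[OF i_out(1), of "s + k"] k by simp
    show ?thesis
    proof (cases k)
      case 0
      then show ?thesis using i_eq \<open>m < n\<close> by simp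
    next
      case (Suc k')
      then have "i = (s + k') mod n" using i_eq by simp
      then have "i \<in> arc n s m" unfolding arc_def using k Suc by auto
      then show ?thesis using i_out by simp
    qed
  qed
qed

lemma inflow_arc_le:
  assumes "lam \<ge> 0" "s < n" "m \<le> n"
  shows "inflow {..<n} (jammed_ring_rate n lam J) (arc n s m) \<le> 2 * lam"
proof -
  let ?N = "nbrs {..<n} (jammed_ring_rate n lam J) (arc n s m)"
  have "card ?N \<le> card {(s + m) mod n, (s + n - 1) mod n}"
    using nbrs_arc[OF assms(2,3)] by (intro card_mono) auto
  also have "\<dots> \<le> 2" by (simp add: card_insert_if)
  finally have "card ?N \<le> 2" .
  have "inflow {..<n} (jammed_ring_rate n lam J) (arc n s m) \<le> real (card ?N) * lam"
    unfolding inflow_def arc_def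
    by (rule sum_bounded_above) (use sum_jammed_ring_rate_le assms(1) in blast)
  also have "\<dots> \<le> 2 * lam" using \<open>card ?N \<le> 2\<close> assms(1) by (intro mult_right_mono) auto
  finally show ?thesis .
qed

lemma jammed_ring_avg_age_ge_sqrt:
  assumes "lam > 0" "ls \<ge> 0" "n > 0"
  shows "ls / (3 * lam) * sqrt (real n) \<le> jammed_ring_avg_age n lam ls J"
proof -
  define is_arc where "is_arc S \<longleftrightarrow> (\<exists>s m. s < n \<and> 0 < m \<and> m \<le> n \<and> S = arc n s m)" for S
  have age: "ls / (3 * lam) * sqrt (real n)
      \<le> version_age {..<n} (\<lambda>_. lam / real n) (jammed_ring_rate n lam J) ls {i}" if "i < n" for i
  proof -
    have "ls / (3 * lam) * (2 * sqrt (real n) - real (card {i}))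
        \<le> version_age {..<n} (\<lambda>_. lam / real n) (jammed_ring_rate n lam J) ls {i}"
    proof (rule version_age_ge_bounded_inflow[where P = is_arc and w = "2 * lam"])
      show "is_arc S \<Longrightarrow> S \<subseteq> {..<n} \<and> S \<noteq> {}" for S
        unfolding is_arc_def arc_def using \<open>n > 0\<close> by auto
      show "is_arc S \<Longrightarrow> inflow {..<n} (jammed_ring_rate n lam J) S \<le> 2 * lam" for S
        unfolding is_arc_def using inflow_arc_le \<open>lam > 0\<close> by auto
      show "is_arc (insert a S)" if "is_arc S" "a \<in> nbrs {..<n} (jammed_ring_rate n lam J) S" for S a
      proof -
        obtain s m where sm: "s < n" "0 < m" "m \<le> n" "S = arc n s m" using \<open>is_arc S\<close> is_arc_def by auto
        then have "m < n" "a = (s + m) mod n \<or> a = (s + n - 1) mod n" using nbrs_arc that(2) by auto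
        then show ?thesis
          using sm insert_arc_end insert_arc_start[OF \<open>s < n\<close>] \<open>n > 0\<close> unfolding is_arc_def
          by (metis Suc_leI zero_less_Suc mod_less_divisor)
      qed
      have "i < n \<and> 0 < (1::nat) \<and> 1 \<le> n \<and> {i} = arc n i 1"
        unfolding arc_def using \<open>i < n\<close> by (simp add: lessThan_Suc)
      then show "is_arc {i}" unfolding is_arc_def by blast
      show "ls / (3 * lam) * (lam / real n * (2 * sqrt (real n))\<^sup>2 / 4 + 2 * lam) \<le> ls"
        using \<open>lam > 0\<close> \<open>n > 0\<close> by (simp add: field_simps)
    qed (use \<open>lam > 0\<close> \<open>ls \<ge> 0\<close> \<open>n > 0\<close> in auto)
    moreover have "ls / (3 * lam) * sqrt (real n) \<le> ls / (3 * lam) * (2 * sqrt (real n) - real (card {i}))"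
      using \<open>lam > 0\<close> \<open>ls \<ge> 0\<close> \<open>n > 0\<close> by (intro mult_left_mono) auto
    ultimately show ?thesis by linarith
  qed
  have "ls / (3 * lam) * sqrt (real n) = (1 / real n) * (\<Sum>i<n. ls / (3 * lam) * sqrt (real n))"
    using \<open>n > 0\<close> by simp
  also have "\<dots> \<le> jammed_ring_avg_age n lam ls J"
    unfolding jammed_ring_avg_age_def using age by (intro mult_left_mono sum_mono) auto
  finally show ?thesis .
qed

theorem theorem3:
  fixes ls lam \<alpha> c1 c2 :: real and ntil :: "nat \<Rightarrow> nat"
  assumes "ls > 0" and "lam > 0" and "0 \<le> \<alpha>" and "\<alpha> \<le> 1"
    and "0 < c1" and "c1 \<le> c2"
    and "\<And>n. n \<ge> 3 \<Longrightarrow> 1 \<le> ntil n \<and> ntil n \<le> n"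
    and "\<And>n. n \<ge> 3 \<Longrightarrow> c1 * real n powr \<alpha> \<le> real (ntil n) \<and> real (ntil n) \<le> c2 * real n powr \<alpha>"
  shows "\<exists>C > 0. \<exists>N::nat. \<forall>n \<ge> N. \<forall>J. J \<subseteq> {..<n} \<and> card J = ntil n \<longrightarrow>
           jammed_ring_avg_age n lam ls J \<ge>
             (if \<alpha> \<ge> 1/2 then C * real n powr \<alpha> else C * sqrt (real n))"
proof (cases "\<alpha> \<ge> 1/2")
  case True
  have "ls * c1 / lam * real n powr \<alpha> \<le> jammed_ring_avg_age n lam ls J"
    if "n \<ge> 3" "J \<subseteq> {..<n}" "card J = ntil n" for n J
  proof -
    have "J \<noteq> {}" using assms(7)[OF \<open>n \<ge> 3\<close>] \<open>card J = ntil n\<close> by auto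
    have "ls * c1 / lam * real n powr \<alpha> = ls / lam * (c1 * real n powr \<alpha>)" by simp
    also have "\<dots> \<le> ls / lam * real (card J)"
      using assms(1,2) assms(8)[OF \<open>n \<ge> 3\<close>] \<open>card J = ntil n\<close> by (intro mult_left_mono) auto
    also have "\<dots> \<le> jammed_ring_avg_age n lam ls J"
      using jammed_ring_avg_age_ge_card \<open>J \<subseteq> {..<n}\<close> \<open>J \<noteq> {}\<close> assms(1,2) by simp
    finally show ?thesis .
  qed
  moreover have "ls * c1 / lam > 0" using assms by simp
  ultimately show ?thesis using True by (intro exI[of _ "ls * c1 / lam"] exI[of _ 3]) auto
next
  case False
  have "ls / (3 * lam) * sqrt (real n) \<le> jammed_ring_avg_age n lam ls J" if "n \<ge> 1" for n J
    using jammed_ring_avg_age_ge_sqrt assms(1,2) that by simp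
  moreover have "ls / (3 * lam) > 0" using assms by simp
  ultimately show ?thesis using False by (intro exI[of _ "ls / (3 * lam)"] exI[of _ 1]) auto
qed

end
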